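(* Let $z,r$ be real with $z^2+r^2\le1$ and $\rho=\frac12\begin{pmatrix}1+z&r\\ r&1-z\end{pmatrix}$. A state of the form $\rho'=\frac12\begin{pmatrix}1+z'&r'\\ r'&1-z'\end{pmatrix}$ with $z',r'$ real can be obtained as $\rho'=\Lambda(\rho)$ for some physically incoherent operation (PIO) $\Lambda$ on a qubit if and only if the point $(z',r')\in\mathbb{R}^2$ lies in the convex hull of the six points $(z,r),(z,-r),(-z,r),(-z,-r),(1,0),(-1,0)$.
   Context: $\{|0\rangle,|1\rangle\}$ is the computational basis of $\mathbb{C}^2$. A physically incoherent operation (PIO) is a convex combination of channels each having Kraus operators of the form $K_n=U_nP_n$, where $U_n=\sum_i e^{i\theta_{ni}}|\pi_n(i)\rangle\langle i|$ ($\pi_n$ a permutation of $\{0,1\}$, $\theta_{ni}$ real) and $\{P_n\}$ is a complete set of mutually orthogonal diagonal projectors (for a qubit: $\{|0\rangle\langle0|,|1\rangle\langle1|\}$ or $\{I\}$). *)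

theory Defs
  imports "HOL-Analysis.Analysis"
begin

type_synonym qmat = "complex^2^2"

definition adj :: "qmat \<Rightarrow> qmat" where
  "adj A = (\<chi> i j. cnj (A $ j $ i))"

definition phase_perm :: "qmat \<Rightarrow> bool" where
  "phase_perm U \<longleftrightarrow> (\<exists>(\<pi>::2 \<Rightarrow> 2) (\<theta>::2 \<Rightarrow> real). bij \<pi> \<and>
      U = (\<chi> i j. if i = \<pi> j then cis (\<theta> j) else 0))"

definition diag_proj :: "qmat \<Rightarrow> bool" where
  "diag_proj P \<longleftrightarrow> (\<forall>i j. i \<noteq> j \<longrightarrow> P $ i $ j = 0) \<and> (\<forall>i. P $ i $ i = 0 \<or> P $ i $ i = 1)"

definition pio_kraus :: "qmat list \<Rightarrow> bool" where
  "pio_kraus Ks \<longleftrightarrow> (\<exists>Us Ps. length Us = length Ks \<and> length Ps = length Ks \<and>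
     (\<forall>n<length Ks. phase_perm (Us ! n) \<and> diag_proj (Ps ! n) \<and> Ks ! n = Us ! n ** Ps ! n) \<and>
     (\<forall>m<length Ks. \<forall>n<length Ks. m \<noteq> n \<longrightarrow> Ps ! m ** Ps ! n = 0) \<and>
     sum_list Ps = mat 1)"

definition kraus_apply :: "qmat list \<Rightarrow> qmat \<Rightarrow> qmat" where
  "kraus_apply Ks \<rho> = sum_list (map (\<lambda>K. K ** \<rho> ** adj K) Ks)"

definition is_PIO :: "(qmat \<Rightarrow> qmat) \<Rightarrow> bool" where
  "is_PIO \<Lambda> \<longleftrightarrow> (\<exists>cs :: (real \<times> qmat list) list.
      (\<forall>(p, Ks) \<in> set cs. p \<ge> 0 \<and> pio_kraus Ks) \<and> sum_list (map fst cs) = 1 \<and>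
      (\<forall>\<rho>. \<Lambda> \<rho> = sum_list (map (\<lambda>(p, Ks). p *\<^sub>R kraus_apply Ks \<rho>) cs)))"

definition qstate :: "real \<Rightarrow> real \<Rightarrow> qmat" where
  "qstate z r = (\<chi> i j. if i = j then (if i = 0 then complex_of_real ((1 + z) / 2)
                                       else complex_of_real ((1 - z) / 2))
                      else complex_of_real (r / 2))"

end

theory Submission
  imports Defs
begin

text \<open>
  Each Kraus operator \<open>U P\<close> with \<open>P = diag(a, b)\<close>, \<open>a, b \<in> {0, 1}\<close>, sends the population
  difference to \<open>\<plusminus>(a(1 + z) - b(1 - z))/2\<close> and the coherence \<open>r\<close> to \<open>a b r cos \<theta>\<close>.
  Completeness of the projectors leaves only two kinds of channels: a single phase permutation,
  giving \<open>(\<plusminus>z, r cos \<theta>)\<close>, or the two rank-one projectors, giving a point \<open>(\<plusminus>1 or \<plusminus>z, 0)\<close>.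
  All of these lie in the convex hull of the six points, and a general PIO averages them.
  Conversely, the six points are reached by explicit channels (identity, phase flip, bit flip,
  both, and the two resets to \<open>|0\<rangle>\<close>, \<open>|1\<rangle>\<close>), and PIOs are closed under convex combinations.
\<close>

text \<open>The library states facts about the index type \<open>2\<close> with the numerals \<open>1, 2\<close>;
  the definitions index by \<open>0, 1\<close> (note \<open>2 = 0\<close> in this type).\<close>

lemma UNIV_2_01: "(UNIV :: 2 set) = {0, 1}"
proof -
  have "(2::2) = 0"
    by simp
  then show ?thesis
    using UNIV_2 by auto
qed

lemma exhaust_2_01: "(i::2) = 0 \<or> i = 1"
  using UNIV_2_01 by auto

lemma sum_2_01: "sum f (UNIV :: 2 set) = f 0 + f 1"
  by (simp add: UNIV_2_01)

lemma forall_2_01: "(\<forall>i::2. P i) \<longleftrightarrow> P 0 \<and> P 1"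
  by (metis UNIV_2_01 UNIV_I insertE singletonD)

lemma exists_2_01: "(\<exists>i::2. P i) \<longleftrightarrow> P 0 \<or> P 1"
  using forall_2_01[of "\<lambda>i. \<not> P i"] by blast

lemma linear_sum_list: "linear f \<Longrightarrow> f (sum_list xs) = sum_list (map f xs)"
  by (induction xs) (simp_all add: linear_add linear_0)

text \<open>Stated in the shape in which the diagonal entries of \<open>K \<rho> K\<^sup>\<dagger>\<close> come out of the matrix product.\<close>

lemma cos_sin_weighted_square:
  fixes t x y :: real
  shows "cos t * x * y * (cos t * x) + sin t * x * y * (sin t * x) = x\<^sup>2 * y"
proof -
  have "cos t * x * y * (cos t * x) + sin t * x * y * (sin t * x) = x\<^sup>2 * y * ((cos t)\<^sup>2 + (sin t)\<^sup>2)"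
    by (simp only: power2_eq_square distrib_left mult_ac)
  then show ?thesis
    by (simp only: sin_cos_squared_add2 mult_1_right)
qed

lemma zero_one_sum_eq_1_imp_delta:
  fixes a :: "'a \<Rightarrow> real"
  assumes "finite I" and zero_one: "\<And>n. n \<in> I \<Longrightarrow> a n \<in> {0, 1}" and "sum a I = 1"
  obtains n0 where "n0 \<in> I" and "\<And>n. n \<in> I \<Longrightarrow> a n = (if n = n0 then 1 else 0)"
proof -
  obtain n0 where "n0 \<in> I" and "a n0 \<noteq> 0"
    using \<open>sum a I = 1\<close> sum.not_neutral_contains_not_neutral[of a I] by auto
  then have n0: "n0 \<in> I" "a n0 = 1"
    using zero_one by auto
  have nonneg: "0 \<le> a n" if "n \<in> I" for n
    using zero_one[OF that] by auto
  have "a n = 0" if "n \<in> I" "n \<noteq> n0" for n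
  proof (rule ccontr)
    assume "a n \<noteq> 0"
    then have "a n0 + a n = 2"
      using zero_one that n0 by auto
    moreover have "sum a {n0, n} \<le> sum a I"
      using assms nonneg that n0 by (intro sum_mono2) auto
    ultimately show False
      using that \<open>sum a I = 1\<close> by simp
  qed
  then show ?thesis
    using that n0 by auto
qed

definition phase_diag :: "real \<Rightarrow> real \<Rightarrow> qmat" where
  "phase_diag t0 t1 = (\<chi> i j. if i = j then cis (if j = 0 then t0 else t1) else 0)"

definition phase_swap :: "real \<Rightarrow> real \<Rightarrow> qmat" where
  "phase_swap t0 t1 = (\<chi> i j. if i \<noteq> j then cis (if j = 0 then t0 else t1) else 0)"

definition diag_mat :: "real \<Rightarrow> real \<Rightarrow> qmat" where
  "diag_mat a b = (\<chi> i j. if i = j then complex_of_real (if i = 0 then a else b) else 0)"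

lemma phase_perm_iff:
  "phase_perm U \<longleftrightarrow> (\<exists>t0 t1. U = phase_diag t0 t1 \<or> U = phase_swap t0 t1)"
proof
  assume "phase_perm U"
  then obtain \<pi> :: "2 \<Rightarrow> 2" and \<theta> where "bij \<pi>"
    and U: "U = (\<chi> i j. if i = \<pi> j then cis (\<theta> j) else 0)"
    unfolding phase_perm_def by blast
  then have "\<pi> 0 \<noteq> \<pi> 1"
    by (metis bij_def inj_eq zero_neq_one)
  then have "\<pi> 0 = 0 \<and> \<pi> 1 = 1 \<or> \<pi> 0 = 1 \<and> \<pi> 1 = 0"
    using exhaust_2_01[of "\<pi> 0"] exhaust_2_01[of "\<pi> 1"] by auto
  then have "U = phase_diag (\<theta> 0) (\<theta> 1) \<or> U = phase_swap (\<theta> 0) (\<theta> 1)"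
    unfolding U phase_diag_def phase_swap_def by (auto simp: vec_eq_iff forall_2_01)
  then show "\<exists>t0 t1. U = phase_diag t0 t1 \<or> U = phase_swap t0 t1"
    by blast
next
  assume "\<exists>t0 t1. U = phase_diag t0 t1 \<or> U = phase_swap t0 t1"
  then obtain t0 t1 where U: "U = phase_diag t0 t1 \<or> U = phase_swap t0 t1"
    by blast
  define \<theta> where "\<theta> j = (if j = 0 then t0 else t1)" for j :: 2
  define swap :: "2 \<Rightarrow> 2" where "swap j = (if j = 0 then 1 else 0)" for j
  have "bij swap"
    unfolding bij_def inj_def surj_def swap_def by (auto simp: forall_2_01 exists_2_01)
  have "phase_diag t0 t1 = (\<chi> i j. if i = id j then cis (\<theta> j) else 0)"
    unfolding phase_diag_def \<theta>_def by (simp add: vec_eq_iff forall_2_01)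
  moreover have "phase_swap t0 t1 = (\<chi> i j. if i = swap j then cis (\<theta> j) else 0)"
    unfolding phase_swap_def \<theta>_def swap_def by (simp add: vec_eq_iff forall_2_01)
  ultimately show "phase_perm U"
    using U \<open>bij swap\<close> bij_id unfolding phase_perm_def by blast
qed

lemma diag_proj_iff:
  "diag_proj P \<longleftrightarrow> (\<exists>a b. a \<in> {0, 1} \<and> b \<in> {0, 1} \<and> P = diag_mat a b)"
proof
  assume P: "diag_proj P"
  then have "P $ 0 $ 0 \<in> {0, 1}" "P $ 1 $ 1 \<in> {0, 1}"
    unfolding diag_proj_def by auto
  moreover have "P = diag_mat (Re (P $ 0 $ 0)) (Re (P $ 1 $ 1))"
    using P calculation unfolding diag_proj_def diag_mat_def
    by (auto simp: vec_eq_iff forall_2_01)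
  ultimately show "\<exists>a b. a \<in> {0, 1} \<and> b \<in> {0, 1} \<and> P = diag_mat a b"
    by (intro exI[of _ "Re (P $ 0 $ 0)"] exI[of _ "Re (P $ 1 $ 1)"]) auto
next
  assume "\<exists>a b. a \<in> {0, 1} \<and> b \<in> {0, 1} \<and> P = diag_mat a b"
  then obtain a b where "a \<in> {0, 1}" "b \<in> {0, 1}" "P = diag_mat a b"
    by blast
  then show "diag_proj P"
    unfolding diag_proj_def diag_mat_def by (auto simp: forall_2_01)
qed

definition bloch :: "qmat \<Rightarrow> real \<times> real" where
  "bloch A = (Re (A $ 0 $ 0 - A $ 1 $ 1), 2 * Re (A $ 0 $ 1))"

lemma linear_bloch: "linear bloch"
  by (rule linearI) (simp_all add: bloch_def algebra_simps)

lemma bloch_qstate: "bloch (qstate z r) = (z, r)"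
  by (simp add: bloch_def qstate_def field_simps)

lemma bloch_phase_diag_term:
  "bloch ((phase_diag t0 t1 ** diag_mat a b) ** qstate z r ** adj (phase_diag t0 t1 ** diag_mat a b))
     = (a\<^sup>2 * (1 + z) / 2 - b\<^sup>2 * (1 - z) / 2, a * b * r * cos (t0 - t1))"
  by (simp add: bloch_def phase_diag_def diag_mat_def qstate_def adj_def matrix_matrix_mult_def
      sum_2_01 cis_cnj cos_diff cos_sin_weighted_square) (simp add: algebra_simps)

lemma bloch_phase_swap_term:
  "bloch ((phase_swap t0 t1 ** diag_mat a b) ** qstate z r ** adj (phase_swap t0 t1 ** diag_mat a b))
     = (b\<^sup>2 * (1 - z) / 2 - a\<^sup>2 * (1 + z) / 2, a * b * r * cos (t0 - t1))"
  by (simp add: bloch_def phase_swap_def diag_mat_def qstate_def adj_def matrix_matrix_mult_def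
      sum_2_01 cis_cnj cos_diff cos_sin_weighted_square) (simp add: algebra_simps)

lemma bloch_pio_kraus_term:
  assumes "phase_perm U" and "a \<in> {0, 1}" and "b \<in> {0, 1}"
  obtains s c where "s \<in> {-1, 1}" and "\<bar>c\<bar> \<le> 1"
    and "bloch ((U ** diag_mat a b) ** qstate z r ** adj (U ** diag_mat a b))
           = (s * (a * (1 + z) - b * (1 - z)) / 2, a * b * r * c)"
proof -
  have sq: "a\<^sup>2 = a" "b\<^sup>2 = b"
    using assms(2,3) by (auto simp: power2_eq_square)
  obtain t0 t1 where "U = phase_diag t0 t1 \<or> U = phase_swap t0 t1"
    using assms(1) phase_perm_iff by blast
  then show ?thesis
  proof
    assume "U = phase_diag t0 t1"
    then show ?thesis
      using that[of 1 "cos (t0 - t1)"] by (simp add: bloch_phase_diag_term sq diff_divide_distrib)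
  next
    assume "U = phase_swap t0 t1"
    then show ?thesis
      using that[of "-1" "cos (t0 - t1)"] by (simp add: bloch_phase_swap_term sq diff_divide_distrib)
  qed
qed

lemma sum_diag_mat_eq_mat_1:
  assumes "(\<Sum>n\<in>I. diag_mat (a n) (b n)) = mat 1"
  shows "sum a I = 1" and "sum b I = 1"
proof -
  have "complex_of_real (sum a I) = 1" "complex_of_real (sum b I) = 1"
    using arg_cong[OF assms, of "\<lambda>M. M $ 0 $ 0"] arg_cong[OF assms, of "\<lambda>M. M $ 1 $ 1"]
    by (simp_all add: diag_mat_def mat_def)
  then show "sum a I = 1" and "sum b I = 1"
    by (simp_all only: of_real_eq_1_iff)
qed

abbreviation pio_hull :: "real \<Rightarrow> real \<Rightarrow> (real \<times> real) set" where
  "pio_hull z r \<equiv> convex hull {(z, r), (z, -r), (-z, r), (-z, -r), (1, 0), (-1, 0)}"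

lemma pio_hull_contract_coherence:
  assumes "s \<in> {-1, 1}" and "\<bar>c\<bar> \<le> 1"
  shows "(s * z, r * c) \<in> pio_hull z r"
proof -
  have "(s * z, r) \<in> pio_hull z r" "(s * z, -r) \<in> pio_hull z r"
    using assms(1) by (auto intro: hull_inc)
  moreover have "0 \<le> (1 + c) / 2" "0 \<le> (1 - c) / 2"
    using assms(2) by (auto simp: abs_le_iff)
  moreover have "(1 + c) / 2 + (1 - c) / 2 = 1"
    by (simp add: field_simps)
  ultimately have "((1 + c) / 2) *\<^sub>R (s * z, r) + ((1 - c) / 2) *\<^sub>R (s * z, -r) \<in> pio_hull z r"
    by (intro convexD[OF convex_convex_hull])
  moreover have "((1 + c) / 2) *\<^sub>R (s * z, r) + ((1 - c) / 2) *\<^sub>R (s * z, -r) = (s * z, r * c)"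
    by (simp add: field_simps)
  ultimately show ?thesis
    by simp
qed

lemma pio_hull_populations:
  assumes "s0 \<in> {-1, 1}" and "s1 \<in> {-1, 1}"
  shows "((s0 * (1 + z) - s1 * (1 - z)) / 2, 0) \<in> pio_hull z r"
proof -
  have "(z, 0) \<in> pio_hull z r" "(-z, 0) \<in> pio_hull z r"
    using pio_hull_contract_coherence[of 1 0 z r] pio_hull_contract_coherence[of "-1" 0 z r] by simp_all
  moreover have "(1, 0) \<in> pio_hull z r" "(-1, 0) \<in> pio_hull z r"
    by (auto intro: hull_inc)
  ultimately have "(x, 0) \<in> pio_hull z r" if "x \<in> {z, -z, 1, -1}" for x
    using that by (elim insertE emptyE) simp_all
  moreover have "(s0 * (1 + z) - s1 * (1 - z)) / 2 \<in> {z, -z, 1, -1}"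
    using assms by (auto simp: field_simps)
  ultimately show ?thesis
    by blast
qed

lemma pio_kraus_bloch_terms:
  assumes "pio_kraus Ks"
  obtains a b s c where
    "\<And>n. n < length Ks \<Longrightarrow> a n \<in> {0, 1} \<and> b n \<in> {0, 1} \<and> s n \<in> {-1, 1} \<and> \<bar>c n\<bar> \<le> 1"
    and "\<And>n. n < length Ks \<Longrightarrow> bloch (Ks ! n ** qstate z r ** adj (Ks ! n))
           = (s n * (a n * (1 + z) - b n * (1 - z)) / 2, a n * b n * r * c n)"
    and "(\<Sum>n<length Ks. a n) = 1" and "(\<Sum>n<length Ks. b n) = 1"
proof -
  obtain Us Ps where len: "length Ps = length Ks"
    and Ks: "\<And>n. n < length Ks \<Longrightarrow> phase_perm (Us ! n) \<and> diag_proj (Ps ! n) \<and> Ks ! n = Us ! n ** Ps ! n"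
    and complete: "sum_list Ps = mat 1"
    using assms unfolding pio_kraus_def by blast
  have "\<exists>a b s c. (a \<in> {0, 1} \<and> b \<in> {0, 1} \<and> s \<in> {-1, 1} \<and> \<bar>c\<bar> \<le> 1) \<and> Ps ! n = diag_mat a b \<and>
      bloch (Ks ! n ** qstate z r ** adj (Ks ! n)) = (s * (a * (1 + z) - b * (1 - z)) / 2, a * b * r * c)"
    if n: "n < length Ks" for n
  proof -
    obtain a b where ab: "a \<in> {0, 1}" "b \<in> {0, 1}" "Ps ! n = diag_mat a b"
      using Ks[OF n] diag_proj_iff by blast
    obtain s c where "s \<in> {-1, 1}" "\<bar>c\<bar> \<le> 1"
      "bloch ((Us ! n ** diag_mat a b) ** qstate z r ** adj (Us ! n ** diag_mat a b))
         = (s * (a * (1 + z) - b * (1 - z)) / 2, a * b * r * c)"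
      using bloch_pio_kraus_term Ks[OF n] ab(1,2) by metis
    then show ?thesis
      using ab Ks[OF n] by auto
  qed
  then obtain a b s c where bounds: "\<And>n. n < length Ks \<Longrightarrow>
        a n \<in> {0, 1} \<and> b n \<in> {0, 1} \<and> s n \<in> {-1, 1} \<and> \<bar>c n\<bar> \<le> 1"
    and proj: "\<And>n. n < length Ks \<Longrightarrow> Ps ! n = diag_mat (a n) (b n)"
    and terms: "\<And>n. n < length Ks \<Longrightarrow> bloch (Ks ! n ** qstate z r ** adj (Ks ! n))
        = (s n * (a n * (1 + z) - b n * (1 - z)) / 2, a n * b n * r * c n)"
    by metis
  have "(\<Sum>n<length Ks. diag_mat (a n) (b n)) = (\<Sum>n<length Ks. Ps ! n)"
    using proj by (intro sum.cong) auto
  also have "\<dots> = mat 1"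
    using complete len by (simp add: sum_list_sum_nth atLeast0LessThan)
  finally have "(\<Sum>n<length Ks. a n) = 1" and "(\<Sum>n<length Ks. b n) = 1"
    by (rule sum_diag_mat_eq_mat_1)+
  with bounds terms show ?thesis
    using that by blast
qed

lemma bloch_kraus_apply_mem_pio_hull:
  assumes "pio_kraus Ks"
  shows "bloch (kraus_apply Ks (qstate z r)) \<in> pio_hull z r"
proof -
  define I where "I = {..<length Ks}"
  obtain a b s c where bounds: "\<And>n. n \<in> I \<Longrightarrow>
        a n \<in> {0, 1} \<and> b n \<in> {0, 1} \<and> s n \<in> {-1, 1} \<and> \<bar>c n\<bar> \<le> 1"
    and terms: "\<And>n. n \<in> I \<Longrightarrow> bloch (Ks ! n ** qstate z r ** adj (Ks ! n))
        = (s n * (a n * (1 + z) - b n * (1 - z)) / 2, a n * b n * r * c n)"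
    and sum_a: "sum a I = 1" and sum_b: "sum b I = 1"
    using pio_kraus_bloch_terms[OF assms, of z r] unfolding I_def lessThan_iff by metis
  have "finite I"
    by (simp add: I_def)
  have a01: "a n \<in> {0, 1}" and b01: "b n \<in> {0, 1}" and sign: "s n \<in> {-1, 1}"
    and contraction: "\<bar>c n\<bar> \<le> 1" if "n \<in> I" for n
    using bounds[OF that] by auto
  text \<open>The projectors \<open>diag(a n, b n)\<close> form a resolution of the identity, so \<open>|0\<rangle>\<langle>0|\<close> is
    carried by a single Kraus operator \<open>n0\<close> and \<open>|1\<rangle>\<langle>1|\<close> by a single \<open>n1\<close>.\<close>
  obtain n0 where n0: "n0 \<in> I" "\<And>n. n \<in> I \<Longrightarrow> a n = (if n = n0 then 1 else 0)"
    using zero_one_sum_eq_1_imp_delta[OF \<open>finite I\<close> a01 sum_a] by blast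
  obtain n1 where n1: "n1 \<in> I" "\<And>n. n \<in> I \<Longrightarrow> b n = (if n = n1 then 1 else 0)"
    using zero_one_sum_eq_1_imp_delta[OF \<open>finite I\<close> b01 sum_b] by blast
  have "bloch (kraus_apply Ks (qstate z r)) = (\<Sum>n\<in>I. bloch (Ks ! n ** qstate z r ** adj (Ks ! n)))"
    unfolding kraus_apply_def linear_sum_list[OF linear_bloch]
    by (simp add: sum_list_sum_nth I_def atLeast0LessThan)
  also have "\<dots> = (\<Sum>n\<in>I. (if n = n0 then (s n * (1 + z) / 2, if n = n1 then r * c n else 0) else 0)
      - (if n = n1 then (s n * (1 - z) / 2, 0) else 0))"
  proof (rule sum.cong)
    fix n assume n: "n \<in> I"
    show "bloch (Ks ! n ** qstate z r ** adj (Ks ! n))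
        = (if n = n0 then (s n * (1 + z) / 2, if n = n1 then r * c n else 0) else 0)
          - (if n = n1 then (s n * (1 - z) / 2, 0) else 0)"
      unfolding terms[OF n] n0(2)[OF n] n1(2)[OF n] by (simp add: field_simps zero_prod_def)
  qed simp
  also have "\<dots> = ((s n0 * (1 + z) - s n1 * (1 - z)) / 2, if n0 = n1 then r * c n0 else 0)"
    using n0(1) n1(1) \<open>finite I\<close> by (simp add: sum_subtractf diff_divide_distrib)
  finally have bloch_eq: "bloch (kraus_apply Ks (qstate z r))
      = ((s n0 * (1 + z) - s n1 * (1 - z)) / 2, if n0 = n1 then r * c n0 else 0)" .
  show ?thesis
  proof (cases "n0 = n1")
    case True
    then have "bloch (kraus_apply Ks (qstate z r)) = (s n0 * z, r * c n0)"
      unfolding bloch_eq by (simp add: algebra_simps)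
    then show ?thesis
      using pio_hull_contract_coherence[OF sign contraction, OF n0(1) n0(1)] by simp
  next
    case False
    then show ?thesis
      unfolding bloch_eq using pio_hull_populations[OF sign sign, OF n0(1) n1(1)] by simp
  qed
qed

lemma is_PIO_bloch_mem_pio_hull:
  assumes "is_PIO \<Lambda>"
  shows "bloch (\<Lambda> (qstate z r)) \<in> pio_hull z r"
proof -
  obtain cs where cs: "\<forall>(p, Ks) \<in> set cs. 0 \<le> p \<and> pio_kraus Ks" "sum_list (map fst cs) = 1"
    and \<Lambda>: "\<And>\<rho>. \<Lambda> \<rho> = sum_list (map (\<lambda>(p, Ks). p *\<^sub>R kraus_apply Ks \<rho>) cs)"
    using assms unfolding is_PIO_def by blast
  define I where "I = {..<length cs}"
  have weights: "0 \<le> fst (cs ! i)" and kraus: "pio_kraus (snd (cs ! i))" if "i \<in> I" for i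
    using cs(1) nth_mem[of i cs] that unfolding I_def by (auto simp: case_prod_beta)
  have "bloch (\<Lambda> (qstate z r)) = (\<Sum>i\<in>I. fst (cs ! i) *\<^sub>R bloch (kraus_apply (snd (cs ! i)) (qstate z r)))"
    unfolding \<Lambda> linear_sum_list[OF linear_bloch] I_def
    by (simp add: sum_list_sum_nth atLeast0LessThan case_prod_beta linear_scale[OF linear_bloch])
  also have "\<dots> \<in> pio_hull z r"
  proof (rule convex_sum)
    show "(\<Sum>i\<in>I. fst (cs ! i)) = 1"
      using cs(2) by (simp add: sum_list_sum_nth I_def atLeast0LessThan)
  qed (use weights kraus bloch_kraus_apply_mem_pio_hull in \<open>auto simp: I_def\<close>)
  finally show ?thesis .
qed

lemma is_PIO_kraus_apply: "pio_kraus Ks \<Longrightarrow> is_PIO (kraus_apply Ks)"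
  unfolding is_PIO_def by (rule exI[of _ "[(1, Ks)]"]) simp

lemma is_PIO_convex_comb:
  assumes "is_PIO \<Lambda>1" and "is_PIO \<Lambda>2" and "0 \<le> u" and "0 \<le> v" and "u + v = 1"
  shows "is_PIO (\<lambda>\<rho>. u *\<^sub>R \<Lambda>1 \<rho> + v *\<^sub>R \<Lambda>2 \<rho>)"
proof -
  obtain cs1 where cs1: "\<forall>(p, Ks) \<in> set cs1. 0 \<le> p \<and> pio_kraus Ks" "sum_list (map fst cs1) = 1"
      "\<And>\<rho>. \<Lambda>1 \<rho> = sum_list (map (\<lambda>(p, Ks). p *\<^sub>R kraus_apply Ks \<rho>) cs1)"
    using assms(1) unfolding is_PIO_def by blast
  obtain cs2 where cs2: "\<forall>(p, Ks) \<in> set cs2. 0 \<le> p \<and> pio_kraus Ks" "sum_list (map fst cs2) = 1"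
      "\<And>\<rho>. \<Lambda>2 \<rho> = sum_list (map (\<lambda>(p, Ks). p *\<^sub>R kraus_apply Ks \<rho>) cs2)"
    using assms(2) unfolding is_PIO_def by blast
  have scale: "sum_list (map (\<lambda>(p, Ks). p *\<^sub>R kraus_apply Ks \<rho>) (map (apfst ((*) w)) cs))
      = w *\<^sub>R sum_list (map (\<lambda>(p, Ks). p *\<^sub>R kraus_apply Ks \<rho>) cs)" for w \<rho> and cs :: "(real \<times> qmat list) list"
    by (simp add: linear_sum_list[OF linear_scale_self] o_def case_prod_beta)
  show ?thesis
    unfolding is_PIO_def
  proof (intro exI conjI)
    let ?cs = "map (apfst ((*) u)) cs1 @ map (apfst ((*) v)) cs2"
    show "\<forall>(p, Ks) \<in> set ?cs. 0 \<le> p \<and> pio_kraus Ks"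
      using cs1(1) cs2(1) assms(3,4) by auto
    show "sum_list (map fst ?cs) = 1"
      using cs1(2) cs2(2) assms(5) by (simp add: o_def sum_list_const_mult)
    show "\<forall>\<rho>. u *\<^sub>R \<Lambda>1 \<rho> + v *\<^sub>R \<Lambda>2 \<rho> = sum_list (map (\<lambda>(p, Ks). p *\<^sub>R kraus_apply Ks \<rho>) ?cs)"
      unfolding map_append sum_list_append scale using cs1(3) cs2(3) by simp
  qed
qed

lemma qstate_convex_comb:
  assumes "u + v = 1"
  shows "u *\<^sub>R qstate z1 r1 + v *\<^sub>R qstate z2 r2 = qstate (u * z1 + v * z2) (u * r1 + v * r2)"
  using assms unfolding qstate_def
  by (simp add: vec_eq_iff forall_2_01 complex_eq_iff algebra_simps add_divide_distrib diff_divide_distrib)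

definition pio_reachable :: "real \<Rightarrow> real \<Rightarrow> (real \<times> real) set" where
  "pio_reachable z r = {p. \<exists>\<Lambda>. is_PIO \<Lambda> \<and> \<Lambda> (qstate z r) = qstate (fst p) (snd p)}"

lemma convex_pio_reachable: "convex (pio_reachable z r)"
proof (rule convexI)
  fix p q :: "real \<times> real" and u v :: real
  assume "p \<in> pio_reachable z r" "q \<in> pio_reachable z r" and uv: "0 \<le> u" "0 \<le> v" "u + v = 1"
  then obtain \<Lambda>1 \<Lambda>2 where \<Lambda>1: "is_PIO \<Lambda>1" "\<Lambda>1 (qstate z r) = qstate (fst p) (snd p)"
    and \<Lambda>2: "is_PIO \<Lambda>2" "\<Lambda>2 (qstate z r) = qstate (fst q) (snd q)"
    unfolding pio_reachable_def by blast
  have "is_PIO (\<lambda>\<rho>. u *\<^sub>R \<Lambda>1 \<rho> + v *\<^sub>R \<Lambda>2 \<rho>)"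
    by (rule is_PIO_convex_comb[OF \<Lambda>1(1) \<Lambda>2(1) uv])
  moreover have "u *\<^sub>R \<Lambda>1 (qstate z r) + v *\<^sub>R \<Lambda>2 (qstate z r)
      = qstate (fst (u *\<^sub>R p + v *\<^sub>R q)) (snd (u *\<^sub>R p + v *\<^sub>R q))"
    unfolding \<Lambda>1(2) \<Lambda>2(2) qstate_convex_comb[OF uv(3)] by simp
  ultimately show "u *\<^sub>R p + v *\<^sub>R q \<in> pio_reachable z r"
    unfolding pio_reachable_def by blast
qed

lemma phase_perm_mat_1: "phase_perm (mat 1)"
proof -
  have "mat 1 = phase_diag 0 0"
    unfolding phase_diag_def mat_def by (simp add: vec_eq_iff)
  then show ?thesis
    using phase_perm_iff by blast
qed

lemma pio_kraus_single:
  assumes "phase_perm U"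
  shows "pio_kraus [U]"
proof -
  have "diag_proj (mat 1)"
    unfolding diag_proj_def mat_def by simp
  then show ?thesis
    using assms unfolding pio_kraus_def
    by (intro exI[of _ "[U]"] exI[of _ "[mat 1]"]) (simp add: matrix_mul_rid)
qed

lemma pio_kraus_pair:
  assumes "phase_perm U" and "phase_perm V"
  shows "pio_kraus [U ** diag_mat 1 0, V ** diag_mat 0 1]"
proof -
  have "diag_proj (diag_mat 1 0)" "diag_proj (diag_mat 0 1)"
    using diag_proj_iff by blast+
  moreover have "diag_mat 1 0 ** diag_mat 0 1 = 0" "diag_mat 0 1 ** diag_mat 1 0 = 0"
    by (simp_all add: diag_mat_def matrix_matrix_mult_def sum_2_01 vec_eq_iff forall_2_01)
  moreover have "diag_mat 1 0 + diag_mat 0 1 = mat 1"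
    by (simp add: diag_mat_def mat_def vec_eq_iff forall_2_01)
  ultimately show ?thesis
    using assms unfolding pio_kraus_def
    by (intro exI[of _ "[U, V]"] exI[of _ "[diag_mat 1 0, diag_mat 0 1]"]) (auto simp: less_Suc_eq)
qed

lemma kraus_apply_mat_1: "kraus_apply [mat 1] A = A"
  by (simp add: kraus_apply_def adj_def mat_def vec_eq_iff forall_2_01 matrix_matrix_mult_def sum_2_01)

lemma kraus_apply_phase_flip: "kraus_apply [phase_diag 0 pi] (qstate z r) = qstate z (-r)"
  by (simp add: kraus_apply_def phase_diag_def qstate_def adj_def matrix_matrix_mult_def sum_2_01
      vec_eq_iff forall_2_01 complex_eq_iff)
    (simp add: diff_divide_distrib)

lemma kraus_apply_bit_flip: "kraus_apply [phase_swap 0 0] (qstate z r) = qstate (-z) r"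
  by (simp add: kraus_apply_def phase_swap_def qstate_def adj_def matrix_matrix_mult_def sum_2_01
      vec_eq_iff forall_2_01 complex_eq_iff)

lemma kraus_apply_bit_phase_flip: "kraus_apply [phase_swap 0 pi] (qstate z r) = qstate (-z) (-r)"
  by (simp add: kraus_apply_def phase_swap_def qstate_def adj_def matrix_matrix_mult_def sum_2_01
      vec_eq_iff forall_2_01 field_simps)

lemma kraus_apply_reset_0:
  "kraus_apply [mat 1 ** diag_mat 1 0, phase_swap 0 0 ** diag_mat 0 1] (qstate z r) = qstate 1 0"
  by (simp add: kraus_apply_def phase_swap_def diag_mat_def qstate_def adj_def mat_def
      matrix_matrix_mult_def sum_2_01 vec_eq_iff forall_2_01 field_simps)

lemma kraus_apply_reset_1:
  "kraus_apply [phase_swap 0 0 ** diag_mat 1 0, mat 1 ** diag_mat 0 1] (qstate z r) = qstate (-1) 0"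
  by (simp add: kraus_apply_def phase_swap_def diag_mat_def qstate_def adj_def mat_def
      matrix_matrix_mult_def sum_2_01 vec_eq_iff forall_2_01 field_simps)

lemma pio_hull_subset_pio_reachable: "pio_hull z r \<subseteq> pio_reachable z r"
proof (rule hull_minimal)
  have reach: "(z', r') \<in> pio_reachable z r"
    if "pio_kraus Ks" "kraus_apply Ks (qstate z r) = qstate z' r'" for Ks z' r'
    using that is_PIO_kraus_apply unfolding pio_reachable_def by auto
  have flips: "phase_perm (phase_diag 0 pi)" "phase_perm (phase_swap 0 0)" "phase_perm (phase_swap 0 pi)"
    using phase_perm_iff by blast+
  show "{(z, r), (z, -r), (-z, r), (-z, -r), (1, 0), (-1, 0)} \<subseteq> pio_reachable z r"
    using reach[OF pio_kraus_single[OF phase_perm_mat_1] kraus_apply_mat_1]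
      reach[OF pio_kraus_single[OF flips(1)] kraus_apply_phase_flip]
      reach[OF pio_kraus_single[OF flips(2)] kraus_apply_bit_flip]
      reach[OF pio_kraus_single[OF flips(3)] kraus_apply_bit_phase_flip]
      reach[OF pio_kraus_pair[OF phase_perm_mat_1 flips(2)] kraus_apply_reset_0]
      reach[OF pio_kraus_pair[OF flips(2) phase_perm_mat_1] kraus_apply_reset_1]
    by simp
qed (rule convex_pio_reachable)

lemma pio_reachable_eq_pio_hull: "pio_reachable z r = pio_hull z r"
proof
  show "pio_reachable z r \<subseteq> pio_hull z r"
  proof
    fix p assume "p \<in> pio_reachable z r"
    then obtain \<Lambda> where "is_PIO \<Lambda>" and "\<Lambda> (qstate z r) = qstate (fst p) (snd p)"
      unfolding pio_reachable_def by blast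
    then show "p \<in> pio_hull z r"
      using is_PIO_bloch_mem_pio_hull[of \<Lambda> z r] by (simp add: bloch_qstate)
  qed
qed (rule pio_hull_subset_pio_reachable)

theorem mainTheorem6:
  fixes z r z' r' :: real
  assumes "z\<^sup>2 + r\<^sup>2 \<le> 1"
  shows "(\<exists>\<Lambda>. is_PIO \<Lambda> \<and> \<Lambda> (qstate z r) = qstate z' r') \<longleftrightarrow>
         (z', r') \<in> convex hull {(z, r), (z, -r), (-z, r), (-z, -r), (1, 0), (-1, 0)}"
proof -
  have "(z', r') \<in> pio_reachable z r \<longleftrightarrow> (z', r') \<in> pio_hull z r"
    by (simp only: pio_reachable_eq_pio_hull)
  then show ?thesis
    unfolding pio_reachable_def by simp
qed

end
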